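(* Suppose there is a horizontal lift along $\phi_0:\mathcal{A}\to\mathcal{B}$ and $H^2_{\mathrm{CE,der}}(\mathcal{A},\mathcal{B})=\{0\}$. Then for any formal Poisson deformations $\pi$ of $\pi_0$ and $\sigma$ of $\sigma_0$ there exists a derivation $X\in\lambda\mathrm{Der}(\mathcal{B})[[\lambda]]$ such that $\Phi=\exp(X)\phi_0:(\mathcal{A}[[\lambda]],\pi)\to(\mathcal{B}[[\lambda]],\sigma)$ is a Poisson morphism.
   Context: $\mathbb{K}$ is a field of characteristic zero (e.g. $\mathbb{R}$ or $\mathbb{C}$). $\mathcal{A},\mathcal{B}$ are commutative $\mathbb{K}$-algebras with Poisson brackets $\pi_0=\{\cdot,\cdot\}_{\mathcal{A}}$, $\sigma_0=\{\cdot,\cdot\}_{\mathcal{B}}$, and $\phi_0:\mathcal{A}\to\mathcal{B}$ is a Poisson morphism (algebra morphism preserving brackets). A formal Poisson deformation of $\pi_0$ is a $\mathbb{K}[[\lambda]]$-bilinear Poisson bracket $\pi=\sum_j\lambda^j\pi_j$ on $\mathcal{A}[[\lambda]]$ (with its $\lambda$-linearly extended commutative product) whose zeroth-order term is $\pi_0$. $\mathrm{Der}(\mathcal{B})$ is the space of derivations of $\mathcal{B}$; for $X\in\lambda\mathrm{Der}(\mathcal{B})[[\lambda]]$, $\exp(X)=\sum_n X^n/n!$ is an algebra automorphism of $\mathcal{B}[[\lambda]]$; maps are extended $\lambda$-linearly. Chevalley–Eilenberg complex: $C^0_{\mathrm{CE}}(\mathcal{A},\mathcal{B})=\mathcal{B}$,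 $C^k_{\mathrm{CE}}(\mathcal{A},\mathcal{B})$ = $k$-linear antisymmetric maps $\mathcal{A}^k\to\mathcal{B}$, with $(\delta D)(a_0,\dots,a_k)=\sum_j(-1)^j\{\phi_0(a_j),D(a_0,\dots,\widehat{a_j},\dots,a_k)\}_{\mathcal{B}}+\sum_{i<j}(-1)^{i+j}D(\{a_i,a_j\}_{\mathcal{A}},a_0,\dots,\widehat{a_i},\dots,\widehat{a_j},\dots,a_k)$ (for undeformed brackets). $C^k_{\mathrm{CE,der}}(\mathcal{A},\mathcal{B})$ is the subcomplex of cochains that are derivations along $\phi_0$ in each argument: $D(\dots,aa',\dots)=\phi_0(a)D(\dots,a',\dots)+D(\dots,a,\dots)\phi_0(a')$ (with $C^0_{\mathrm{CE,der}}=\mathcal{B}$); its cohomology is $H^\bullet_{\mathrm{CE,der}}(\mathcal{A},\mathcal{B})$. A horizontal lift along $\phi_0$ is a map $C^1_{\mathrm{CE,der}}(\mathcal{A},\mathcal{B})\to\mathrm{Der}(\mathcal{B})$, $D\mapsto D^h$, with $(aD)^h=\phi_0(a)D^h$ for $a\in\mathcal{A}$ (where $(aD)(a_1)=\phi_0(a)D(a_1)$) and $D^h\circ\phi_0=D$. *)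

theory Defs
  imports Complex_Main
begin

text \<open>A commutative (unital) K-algebra is a type of class comm_ring_1 together with
a scalar multiplication s :: 'k => 'a => 'a making it a K-module (library locale
module) and compatible with the product. Formal power series in lambda with
coefficients in A are represented as functions nat => 'a (n-th coefficient).\<close>

definition kalg :: "('k::field_char_0 \<Rightarrow> 'a::comm_ring_1 \<Rightarrow> 'a) \<Rightarrow> bool" where
  "kalg s \<longleftrightarrow> module s \<and> (\<forall>c x y. s c (x * y) = s c x * y)"

definition kbilinear ::
  "('k::field_char_0 \<Rightarrow> 'a::comm_ring_1 \<Rightarrow> 'a) \<Rightarrow> ('k \<Rightarrow> 'b::comm_ring_1 \<Rightarrow> 'b)
   \<Rightarrow> ('a \<Rightarrow> 'a \<Rightarrow> 'b) \<Rightarrow> bool" where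
  "kbilinear sA sB P \<longleftrightarrow> (\<forall>a. module_hom sA sB (P a)) \<and> (\<forall>b. module_hom sA sB (\<lambda>a. P a b))"

definition poisson_bracket :: "('k::field_char_0 \<Rightarrow> 'a::comm_ring_1 \<Rightarrow> 'a) \<Rightarrow> ('a \<Rightarrow> 'a \<Rightarrow> 'a) \<Rightarrow> bool" where
  "poisson_bracket s P \<longleftrightarrow> kbilinear s s P
     \<and> (\<forall>a b. P a b = - P b a)
     \<and> (\<forall>a b c. P a (P b c) + P b (P c a) + P c (P a b) = 0)
     \<and> (\<forall>a b c. P a (b * c) = P a b * c + b * P a c)"

definition alg_hom :: "('k::field_char_0 \<Rightarrow> 'a::comm_ring_1 \<Rightarrow> 'a) \<Rightarrow> ('k \<Rightarrow> 'b::comm_ring_1 \<Rightarrow> 'b)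
   \<Rightarrow> ('a \<Rightarrow> 'b) \<Rightarrow> bool" where
  "alg_hom sA sB f \<longleftrightarrow> module_hom sA sB f \<and> (\<forall>x y. f (x * y) = f x * f y) \<and> f 1 = 1"

definition poisson_hom :: "('k::field_char_0 \<Rightarrow> 'a::comm_ring_1 \<Rightarrow> 'a) \<Rightarrow> ('k \<Rightarrow> 'b::comm_ring_1 \<Rightarrow> 'b)
   \<Rightarrow> ('a \<Rightarrow> 'a \<Rightarrow> 'a) \<Rightarrow> ('b \<Rightarrow> 'b \<Rightarrow> 'b) \<Rightarrow> ('a \<Rightarrow> 'b) \<Rightarrow> bool" where
  "poisson_hom sA sB P Q f \<longleftrightarrow> alg_hom sA sB f \<and> (\<forall>x y. f (P x y) = Q (f x) (f y))"

definition is_der :: "('k::field_char_0 \<Rightarrow> 'b::comm_ring_1 \<Rightarrow> 'b) \<Rightarrow> ('b \<Rightarrow> 'b) \<Rightarrow> bool" where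
  "is_der s D \<longleftrightarrow> module_hom s s D \<and> (\<forall>x y. D (x * y) = x * D y + D x * y)"

definition der_along :: "('a::comm_ring_1 \<Rightarrow> 'b::comm_ring_1) \<Rightarrow> ('a \<Rightarrow> 'b) \<Rightarrow> bool" where
  "der_along phi D \<longleftrightarrow> (\<forall>a a'. D (a * a') = phi a * D a' + D a * phi a')"

definition CE1_der :: "('k::field_char_0 \<Rightarrow> 'a::comm_ring_1 \<Rightarrow> 'a) \<Rightarrow> ('k \<Rightarrow> 'b::comm_ring_1 \<Rightarrow> 'b)
   \<Rightarrow> ('a \<Rightarrow> 'b) \<Rightarrow> ('a \<Rightarrow> 'b) \<Rightarrow> bool" where
  "CE1_der sA sB phi D \<longleftrightarrow> module_hom sA sB D \<and> der_along phi D"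

definition CE2_der :: "('k::field_char_0 \<Rightarrow> 'a::comm_ring_1 \<Rightarrow> 'a) \<Rightarrow> ('k \<Rightarrow> 'b::comm_ring_1 \<Rightarrow> 'b)
   \<Rightarrow> ('a \<Rightarrow> 'b) \<Rightarrow> ('a \<Rightarrow> 'a \<Rightarrow> 'b) \<Rightarrow> bool" where
  "CE2_der sA sB phi D \<longleftrightarrow> kbilinear sA sB D \<and> (\<forall>a b. D a b = - D b a)
     \<and> (\<forall>a. der_along phi (D a)) \<and> (\<forall>b. der_along phi (\<lambda>a. D a b))"

definition ce_d1 :: "('a \<Rightarrow> 'a \<Rightarrow> 'a) \<Rightarrow> ('b::ab_group_add \<Rightarrow> 'b \<Rightarrow> 'b) \<Rightarrow> ('a \<Rightarrow> 'b)
   \<Rightarrow> ('a \<Rightarrow> 'b) \<Rightarrow> ('a \<Rightarrow> 'a \<Rightarrow> 'b)" where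
  "ce_d1 P Q phi E = (\<lambda>a0 a1. Q (phi a0) (E a1) - Q (phi a1) (E a0) - E (P a0 a1))"

definition ce_d2 :: "('a \<Rightarrow> 'a \<Rightarrow> 'a) \<Rightarrow> ('b::ab_group_add \<Rightarrow> 'b \<Rightarrow> 'b) \<Rightarrow> ('a \<Rightarrow> 'b)
   \<Rightarrow> ('a \<Rightarrow> 'a \<Rightarrow> 'b) \<Rightarrow> ('a \<Rightarrow> 'a \<Rightarrow> 'a \<Rightarrow> 'b)" where
  "ce_d2 P Q phi D = (\<lambda>a0 a1 a2.
      Q (phi a0) (D a1 a2) - Q (phi a1) (D a0 a2) + Q (phi a2) (D a0 a1)
    - D (P a0 a1) a2 + D (P a0 a2) a1 - D (P a1 a2) a0)"

definition H2_CE_der_zero :: "('k::field_char_0 \<Rightarrow> 'a::comm_ring_1 \<Rightarrow> 'a) \<Rightarrow> ('k \<Rightarrow> 'b::comm_ring_1 \<Rightarrow> 'b)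
   \<Rightarrow> ('a \<Rightarrow> 'a \<Rightarrow> 'a) \<Rightarrow> ('b \<Rightarrow> 'b \<Rightarrow> 'b) \<Rightarrow> ('a \<Rightarrow> 'b) \<Rightarrow> bool" where
  "H2_CE_der_zero sA sB P Q phi \<longleftrightarrow>
     (\<forall>D. CE2_der sA sB phi D \<and> ce_d2 P Q phi D = (\<lambda>_ _ _. 0)
        \<longrightarrow> (\<exists>E. CE1_der sA sB phi E \<and> ce_d1 P Q phi E = D))"

definition horizontal_lift :: "('k::field_char_0 \<Rightarrow> 'a::comm_ring_1 \<Rightarrow> 'a) \<Rightarrow> ('k \<Rightarrow> 'b::comm_ring_1 \<Rightarrow> 'b)
   \<Rightarrow> ('a \<Rightarrow> 'b) \<Rightarrow> (('a \<Rightarrow> 'b) \<Rightarrow> ('b \<Rightarrow> 'b)) \<Rightarrow> bool" where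
  "horizontal_lift sA sB phi h \<longleftrightarrow>
     (\<forall>D. CE1_der sA sB phi D \<longrightarrow>
        is_der sB (h D)
      \<and> (\<forall>a. h (\<lambda>a1. phi a * D a1) = (\<lambda>b. phi a * h D b))
      \<and> h D \<circ> phi = D)"

definition ser_mult :: "(nat \<Rightarrow> 'a::comm_ring_1) \<Rightarrow> (nat \<Rightarrow> 'a) \<Rightarrow> nat \<Rightarrow> 'a" where
  "ser_mult f g n = (\<Sum>i\<le>n. f i * g (n - i))"

definition ser_one :: "nat \<Rightarrow> 'a::comm_ring_1" where
  "ser_one n = (if n = 0 then 1 else 0)"

definition ser_smult :: "('k \<Rightarrow> 'a::comm_ring_1 \<Rightarrow> 'a) \<Rightarrow> (nat \<Rightarrow> 'k) \<Rightarrow> (nat \<Rightarrow> 'a) \<Rightarrow> nat \<Rightarrow> 'a" where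
  "ser_smult s c f n = (\<Sum>i\<le>n. s (c i) (f (n - i)))"

text \<open>The K[[lambda]]-bilinear extension of pb = sum_j lambda^j pi_j.\<close>
definition ser_bracket :: "(nat \<Rightarrow> 'a \<Rightarrow> 'a \<Rightarrow> 'a::comm_ring_1) \<Rightarrow> (nat \<Rightarrow> 'a) \<Rightarrow> (nat \<Rightarrow> 'a) \<Rightarrow> nat \<Rightarrow> 'a" where
  "ser_bracket pb f g n = (\<Sum>j\<le>n. \<Sum>k\<le>n - j. pb j (f k) (g (n - j - k)))"

definition formal_poisson_deformation ::
  "('k::field_char_0 \<Rightarrow> 'a::comm_ring_1 \<Rightarrow> 'a) \<Rightarrow> ('a \<Rightarrow> 'a \<Rightarrow> 'a) \<Rightarrow> (nat \<Rightarrow> 'a \<Rightarrow> 'a \<Rightarrow> 'a) \<Rightarrow> bool" where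
  "formal_poisson_deformation s P0 pb \<longleftrightarrow>
     pb 0 = P0 \<and> (\<forall>j. kbilinear s s (pb j))
   \<and> (\<forall>f g. ser_bracket pb f g = (\<lambda>n. - ser_bracket pb g f n))
   \<and> (\<forall>f g h. (\<lambda>n. ser_bracket pb f (ser_bracket pb g h) n + ser_bracket pb g (ser_bracket pb h f) n
                    + ser_bracket pb h (ser_bracket pb f g) n) = (\<lambda>_. 0))
   \<and> (\<forall>f g h. ser_bracket pb f (ser_mult g h)
               = (\<lambda>n. ser_mult (ser_bracket pb f g) h n + ser_mult g (ser_bracket pb f h) n))"

definition ser_map :: "('a \<Rightarrow> 'b) \<Rightarrow> (nat \<Rightarrow> 'a) \<Rightarrow> nat \<Rightarrow> 'b" where
  "ser_map phi f n = phi (f n)"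

definition ser_op :: "(nat \<Rightarrow> 'b \<Rightarrow> 'b::comm_ring_1) \<Rightarrow> (nat \<Rightarrow> 'b) \<Rightarrow> nat \<Rightarrow> 'b" where
  "ser_op X f n = (\<Sum>j\<le>n. X j (f (n - j)))"

text \<open>exp(X) = sum_m X^m / m!. For X in lambda Der(B)[[lambda]] (X_0 = 0) the
n-th coefficient of X^m f vanishes for m > n, so the sum is finite coefficientwise.\<close>
definition ser_exp :: "('k::field_char_0 \<Rightarrow> 'b::comm_ring_1 \<Rightarrow> 'b) \<Rightarrow> (nat \<Rightarrow> 'b \<Rightarrow> 'b)
   \<Rightarrow> (nat \<Rightarrow> 'b) \<Rightarrow> nat \<Rightarrow> 'b" where
  "ser_exp s X f n = (\<Sum>m\<le>n. s (inverse (of_nat (fact m))) ((ser_op X ^^ m) f n))"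

definition ser_poisson_hom :: "('k::field_char_0 \<Rightarrow> 'a::comm_ring_1 \<Rightarrow> 'a) \<Rightarrow> ('k \<Rightarrow> 'b::comm_ring_1 \<Rightarrow> 'b)
   \<Rightarrow> (nat \<Rightarrow> 'a \<Rightarrow> 'a \<Rightarrow> 'a) \<Rightarrow> (nat \<Rightarrow> 'b \<Rightarrow> 'b \<Rightarrow> 'b) \<Rightarrow> ((nat \<Rightarrow> 'a) \<Rightarrow> (nat \<Rightarrow> 'b)) \<Rightarrow> bool" where
  "ser_poisson_hom sA sB pb sigma F \<longleftrightarrow>
     (\<forall>f g. F (\<lambda>n. f n + g n) = (\<lambda>n. F f n + F g n))
   \<and> (\<forall>c f. F (ser_smult sA c f) = ser_smult sB c (F f))
   \<and> (\<forall>f g. F (ser_mult f g) = ser_mult (F f) (F g))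
   \<and> F ser_one = ser_one
   \<and> (\<forall>f g. F (ser_bracket pb f g) = ser_bracket sigma (F f) (F g))"

end

theory Submission
  imports Defs
begin

text \<open>
  For every \<open>X \<in> \<lambda> Der(B)[[\<lambda>]]\<close> the map \<open>exp(X)\<close> is an algebra automorphism, so
  \<open>\<Phi> = exp(X) \<phi>\<^sub>0\<close> is always a morphism of algebras and only the brackets have to be matched;
  \<open>X\<close> is built order by order. If \<open>\<Phi>\<close> preserves the brackets up to order \<open>k\<close>, its defect at
  order \<open>k + 1\<close>, evaluated on constant series, is a 2-cochain of the derivation subcomplex, and
  the Jacobi identities of the two deformed brackets make it a cocycle. As \<open>H\<^sup>2\<close> vanishes it is
  the coboundary \<open>\<delta>E\<close> of some \<open>E\<close> in \<open>C\<^sup>1\<close>; the horizontal lift extends \<open>E\<close> to a derivation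
  \<open>Y\<close> of \<open>B\<close>, and replacing \<open>X\<close> by \<open>X + \<lambda>\<^bsup>k+1\<^esup> Y\<close> changes the defect at order \<open>k + 1\<close> by
  exactly \<open>-\<delta>E\<close> without touching lower orders. The corrections stabilise coefficientwise, and
  their limit is the required \<open>X\<close>.\<close>

section \<open>Formal power series\<close>

lemma sum_eq_single:
  fixes g :: "'i \<Rightarrow> 'c::comm_monoid_add"
  assumes "finite A" "a \<in> A" "\<And>x. x \<in> A \<Longrightarrow> x \<noteq> a \<Longrightarrow> g x = 0"
  shows "sum g A = g a"
  using sum.mono_neutral_right[of A "{a}" g] assms by auto

lemma sum_triangle_swap:
  fixes F :: "nat \<Rightarrow> nat \<Rightarrow> 'c::comm_monoid_add"
  shows "(\<Sum>j\<le>n. \<Sum>i\<le>n - j. F j i) = (\<Sum>i\<le>n. \<Sum>j\<le>n - i. F j i)"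
proof -
  have "(\<Sum>j\<le>n. \<Sum>i\<le>n - j. F j i) = (\<Sum>j\<le>n. \<Sum>i\<le>n. if j + i \<le> n then F j i else 0)"
    by (intro sum.cong refl sum.mono_neutral_cong_left) auto
  also have "\<dots> = (\<Sum>i\<le>n. \<Sum>j\<le>n. if j + i \<le> n then F j i else 0)"
    by (rule sum.swap)
  also have "\<dots> = (\<Sum>i\<le>n. \<Sum>j\<le>n - i. F j i)"
    by (intro sum.cong refl sum.mono_neutral_cong_right) auto
  finally show ?thesis .
qed

lemma sum_triangle_reindex:
  fixes H :: "nat \<Rightarrow> nat \<Rightarrow> 'c::comm_monoid_add"
  shows "(\<Sum>m\<le>n. \<Sum>j\<le>m. H j (m - j)) = (\<Sum>j\<le>n. \<Sum>i\<le>n - j. H j i)"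
proof -
  have "(\<Sum>m\<le>n. \<Sum>j\<le>m. H j (m - j)) = (\<Sum>(j, i) \<in> {(j, i). j + i \<le> n}. H j i)"
    by (rule sum.triangle_reindex_eq[symmetric])
  also have "{(j, i). j + i \<le> n} = (SIGMA j:{..n}. {..n - j})"
    by auto
  also have "(\<Sum>(j, i) \<in> \<dots>. H j i) = (\<Sum>j\<le>n. \<Sum>i\<le>n - j. H j i)"
    by (rule sum.Sigma[symmetric]) auto
  finally show ?thesis .
qed

lemma sum_binomial_pascal:
  fixes T :: "nat \<Rightarrow> nat \<Rightarrow> 'c::comm_ring_1"
  shows "(\<Sum>i\<le>m. of_nat (m choose i) * (T i (Suc m - i) + T (Suc i) (m - i)))
       = (\<Sum>i\<le>Suc m. of_nat (Suc m choose i) * T i (Suc m - i))"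
proof -
  have "(\<Sum>i\<le>m. of_nat (m choose i) * T i (Suc m - i))
      = (\<Sum>i\<le>Suc m. of_nat (m choose i) * T i (Suc m - i))"
    by (simp add: binomial_eq_0)
  also have "\<dots> = T 0 (Suc m) + (\<Sum>i\<le>m. of_nat (m choose Suc i) * T (Suc i) (m - i))"
    by (subst sum.atMost_Suc_shift) simp
  finally have shifted: "(\<Sum>i\<le>m. of_nat (m choose i) * T i (Suc m - i))
      = T 0 (Suc m) + (\<Sum>i\<le>m. of_nat (m choose Suc i) * T (Suc i) (m - i))" .
  have "(\<Sum>i\<le>Suc m. of_nat (Suc m choose i) * T i (Suc m - i))
      = T 0 (Suc m) + (\<Sum>i\<le>m. of_nat (Suc m choose Suc i) * T (Suc i) (m - i))"
    by (subst sum.atMost_Suc_shift) simp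
  also have "\<dots> = T 0 (Suc m) + (\<Sum>i\<le>m. of_nat (m choose Suc i) * T (Suc i) (m - i))
      + (\<Sum>i\<le>m. of_nat (m choose i) * T (Suc i) (m - i))"
    by (simp add: sum.distrib algebra_simps)
  finally show ?thesis
    using shifted by (simp add: sum.distrib algebra_simps)
qed

lemma inverse_fact_mult_binomial:
  assumes "i \<le> m"
  shows "inverse (fact m :: 'k::field_char_0) * of_nat (m choose i)
       = inverse (fact i) * inverse (fact (m - i))"
  using assms by (simp add: binomial_fact field_simps)

definition ser_monom :: "'a \<Rightarrow> nat \<Rightarrow> nat \<Rightarrow> 'a::zero" where
  "ser_monom a p n = (if n = p then a else 0)"

definition ser_shift :: "(nat \<Rightarrow> 'a) \<Rightarrow> nat \<Rightarrow> 'a::zero" where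
  "ser_shift f n = (if n = 0 then 0 else f (n - 1))"

lemma ser_eq_monom_0_plus_shift:
  "(g :: nat \<Rightarrow> 'a::comm_monoid_add) = (\<lambda>n. ser_monom (g 0) 0 n + ser_shift (\<lambda>n. g (Suc n)) n)"
  by (simp add: fun_eq_iff ser_monom_def ser_shift_def)

lemma ser_monom_add: "ser_monom (a + b) p = (\<lambda>n. ser_monom a p n + ser_monom (b::'a::monoid_add) p n)"
  by (auto simp: ser_monom_def)

lemma ser_shift_diff: "ser_shift (\<lambda>n. f n - g n) = (\<lambda>n. ser_shift f n - ser_shift (g::nat \<Rightarrow> 'a::group_add) n)"
  by (auto simp: ser_shift_def)

lemma ser_mult_diff_left: "ser_mult (\<lambda>n. f n - g n) h = (\<lambda>n. ser_mult f h n - ser_mult g h n)"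
  by (auto simp: ser_mult_def sum_subtractf algebra_simps)

lemma ser_mult_diff_right: "ser_mult h (\<lambda>n. f n - g n) = (\<lambda>n. ser_mult h f n - ser_mult h g n)"
  by (auto simp: ser_mult_def sum_subtractf algebra_simps)

lemma ser_mult_monom_0: "ser_mult (ser_monom a 0) (ser_monom b 0) = ser_monom (a * b :: 'a::comm_ring_1) 0"
proof
  fix n
  have "ser_mult (ser_monom a 0) (ser_monom b 0) n = ser_monom a 0 0 * ser_monom b 0 (n - 0)"
    unfolding ser_mult_def by (rule sum_eq_single) (auto simp: ser_monom_def)
  then show "ser_mult (ser_monom a 0) (ser_monom b 0) n = ser_monom (a * b) 0 n"
    by (simp add: ser_monom_def)
qed

lemma ser_mult_eq_0:
  fixes f g :: "nat \<Rightarrow> 'a::comm_ring_1"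
  assumes "\<And>i. i < p \<Longrightarrow> f i = 0" "\<And>i. i < q \<Longrightarrow> g i = 0" "n < p + q"
  shows "ser_mult f g n = 0"
  unfolding ser_mult_def
proof (intro sum.neutral ballI)
  fix i assume "i \<in> {..n}"
  then have "i < p \<or> n - i < q"
    using assms(3) by auto
  then show "f i * g (n - i) = 0"
    using assms(1,2) by auto
qed

lemma ser_mult_low_zero_left:
  fixes f g :: "nat \<Rightarrow> 'a::comm_ring_1"
  assumes "\<And>i. i < p \<Longrightarrow> f i = 0"
  shows "ser_mult f g p = f p * g 0"
proof -
  have "ser_mult f g p = f p * g (p - p)"
    unfolding ser_mult_def by (rule sum_eq_single) (use assms in auto)
  then show ?thesis by simp
qed

lemma ser_mult_low_zero_right:
  fixes f g :: "nat \<Rightarrow> 'a::comm_ring_1"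
  assumes "\<And>i. i < p \<Longrightarrow> g i = 0"
  shows "ser_mult f g p = f 0 * g p"
proof -
  have "ser_mult f g p = f 0 * g (p - 0)"
    unfolding ser_mult_def by (rule sum_eq_single) (use assms in auto)
  then show ?thesis by simp
qed

lemma ser_smult_monom_0: "module s \<Longrightarrow> ser_smult s (ser_monom r 0) g = (\<lambda>n. s r (g n))"
proof
  fix n assume "module s"
  have "ser_smult s (ser_monom r 0) g n = s (ser_monom r 0 0) (g (n - 0))"
    unfolding ser_smult_def
    by (rule sum_eq_single) (auto simp: ser_monom_def module.scale_zero_left[OF \<open>module s\<close>])
  then show "ser_smult s (ser_monom r 0) g n = s r (g n)"
    by (simp add: ser_monom_def)
qed

lemma ser_smult_monom_1: "module s \<Longrightarrow> ser_smult s (ser_monom 1 1) g = ser_shift g"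
proof
  fix n assume "module s"
  show "ser_smult s (ser_monom 1 1) g n = ser_shift g n"
  proof (cases n)
    case 0
    then show ?thesis
      by (simp add: ser_smult_def ser_shift_def ser_monom_def module.scale_zero_left[OF \<open>module s\<close>])
  next
    case (Suc m)
    have "ser_smult s (ser_monom 1 1) g n = s (ser_monom 1 1 1) (g (n - 1))"
      unfolding ser_smult_def
      by (rule sum_eq_single) (auto simp: Suc ser_monom_def module.scale_zero_left[OF \<open>module s\<close>])
    then show ?thesis
      using Suc by (simp add: ser_shift_def ser_monom_def module.scale_one[OF \<open>module s\<close>])
  qed
qed

lemma ser_bracket_0: "ser_bracket pb f g 0 = pb 0 (f 0) (g 0)"
  by (simp add: ser_bracket_def)

lemma ser_bracket_cong:
  assumes "\<And>i. i \<le> n \<Longrightarrow> f i = f' i" "\<And>i. i \<le> n \<Longrightarrow> g i = g' i"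
  shows "ser_bracket pb f g n = ser_bracket pb f' g' n"
  unfolding ser_bracket_def using assms by (intro sum.cong refl) auto

context
  fixes s :: "'k::field_char_0 \<Rightarrow> 'b::comm_ring_1 \<Rightarrow> 'b" and pb :: "nat \<Rightarrow> 'b \<Rightarrow> 'b \<Rightarrow> 'b"
  assumes module: "module s" and bilinear: "\<And>j. kbilinear s s (pb j)"
begin

lemma module_hom_bracket_right: "module_hom s s (pb j a)"
  using bilinear by (simp add: kbilinear_def)

lemma module_hom_bracket_left: "module_hom s s (\<lambda>a. pb j a b)"
  using bilinear by (simp add: kbilinear_def)

lemma bracket_zero_left [simp]: "pb j 0 b = 0"
  using module_hom.zero[OF module_hom_bracket_left] by fastforce

lemma bracket_zero_right [simp]: "pb j a 0 = 0"
  using module_hom.zero[OF module_hom_bracket_right] by blast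

lemma bracket_minus_right: "pb j a (- x) = - pb j a x"
  using module_hom.neg[OF module_hom_bracket_right] by blast

lemma ser_bracket_add_left:
  "ser_bracket pb (\<lambda>n. f n + g n) h = (\<lambda>n. ser_bracket pb f h n + ser_bracket pb g h n)"
  using module_hom.add[OF module_hom_bracket_left]
  by (auto simp: ser_bracket_def sum.distrib)

lemma ser_bracket_add_right:
  "ser_bracket pb f (\<lambda>n. g n + h n) = (\<lambda>n. ser_bracket pb f g n + ser_bracket pb f h n)"
  using module_hom.add[OF module_hom_bracket_right]
  by (auto simp: ser_bracket_def sum.distrib)

lemma ser_bracket_scale_right:
  "ser_bracket pb f (\<lambda>n. s r (g n)) = (\<lambda>n. s r (ser_bracket pb f g n))"
  using module_hom.scale[OF module_hom_bracket_right]
  by (auto simp: ser_bracket_def module.scale_sum_right[OF module])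

lemma ser_bracket_shift_right: "ser_bracket pb f (ser_shift g) = ser_shift (ser_bracket pb f g)"
proof
  fix n
  show "ser_bracket pb f (ser_shift g) n = ser_shift (ser_bracket pb f g) n"
  proof (cases n)
    case 0
    then show ?thesis by (simp add: ser_bracket_def ser_shift_def)
  next
    case (Suc m)
    have inner: "(\<Sum>k\<le>Suc m - j. pb j (f k) (ser_shift g (Suc m - j - k)))
        = (\<Sum>k\<le>m - j. pb j (f k) (g (m - j - k)))" if "j \<le> m" for j
    proof -
      have "Suc m - j = Suc (m - j)"
        using that by auto
      then show ?thesis
        using that by (auto simp: ser_shift_def Suc_diff_le intro!: sum.cong)
    qed
    have "ser_bracket pb f (ser_shift g) n
        = (\<Sum>j\<le>m. \<Sum>k\<le>Suc m - j. pb j (f k) (ser_shift g (Suc m - j - k)))"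
      unfolding ser_bracket_def Suc by (simp add: ser_shift_def)
    also have "\<dots> = ser_bracket pb f g m"
      unfolding ser_bracket_def using inner by simp
    finally show ?thesis
      using Suc by (simp add: ser_shift_def)
  qed
qed

lemma ser_bracket_low_zero_right:
  assumes "\<And>i. i < p \<Longrightarrow> g i = 0"
  shows "ser_bracket pb f g p = pb 0 (f 0) (g p)"
proof -
  have "ser_bracket pb f g p = (\<Sum>k\<le>p - 0. pb 0 (f k) (g (p - 0 - k)))"
    unfolding ser_bracket_def
    by (rule sum_eq_single) (use assms in \<open>auto intro!: sum.neutral\<close>)
  also have "\<dots> = pb 0 (f 0) (g p)"
    by (subst sum_eq_single[of _ 0]) (use assms in auto)
  finally show ?thesis .
qed

lemma ser_bracket_low_zero_left:
  assumes "\<And>i. i < p \<Longrightarrow> f i = 0"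
  shows "ser_bracket pb f g p = pb 0 (f p) (g 0)"
proof -
  have "ser_bracket pb f g p = (\<Sum>k\<le>p - 0. pb 0 (f k) (g (p - 0 - k)))"
    unfolding ser_bracket_def
    by (rule sum_eq_single) (use assms in \<open>auto intro!: sum.neutral\<close>)
  also have "\<dots> = pb 0 (f p) (g 0)"
    by (subst sum_eq_single[of _ p]) (use assms in auto)
  finally show ?thesis .
qed

lemma ser_bracket_perturb:
  assumes "0 < p"
    and "\<And>i. i \<le> p \<Longrightarrow> f' i = f i + ser_monom a p i"
    and "\<And>i. i \<le> p \<Longrightarrow> g' i = g i + ser_monom b p i"
  shows "ser_bracket pb f' g' p = ser_bracket pb f g p + pb 0 (f 0) b + pb 0 a (g 0)"
proof -
  have low: "\<And>i. i < p \<Longrightarrow> ser_monom c p i = 0" for c :: 'b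
    by (simp add: ser_monom_def)
  have "ser_bracket pb f' g' p
      = ser_bracket pb (\<lambda>i. f i + ser_monom a p i) (\<lambda>i. g i + ser_monom b p i) p"
    by (rule ser_bracket_cong) (use assms in auto)
  also have "\<dots> = ser_bracket pb f g p + ser_bracket pb f (ser_monom b p) p
      + ser_bracket pb (ser_monom a p) g p + ser_bracket pb (ser_monom a p) (ser_monom b p) p"
    by (simp add: ser_bracket_add_left ser_bracket_add_right)
  also have "\<dots> = ser_bracket pb f g p + pb 0 (f 0) b + pb 0 a (g 0)"
    using \<open>0 < p\<close>
    by (simp add: ser_bracket_low_zero_left[OF low] ser_bracket_low_zero_right[OF low])
       (simp add: ser_monom_def)
  finally show ?thesis .
qed

end

section \<open>Derivations of B[[\<lambda>]] and their exponentials\<close>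

definition lambda_der :: "('k::field_char_0 \<Rightarrow> 'b::comm_ring_1 \<Rightarrow> 'b) \<Rightarrow> (nat \<Rightarrow> 'b \<Rightarrow> 'b) \<Rightarrow> bool" where
  "lambda_der s X \<longleftrightarrow> X 0 = (\<lambda>_. 0) \<and> (\<forall>j. is_der s (X j))"

lemma ser_op_cong:
  assumes "\<And>j. j \<le> n \<Longrightarrow> X j = X' j" "\<And>i. i \<le> n \<Longrightarrow> f i = f' i"
  shows "ser_op X f n = ser_op X' f' n"
  unfolding ser_op_def using assms by (intro sum.cong) auto

lemma ser_op_pow_cong:
  assumes "\<And>j. j \<le> n \<Longrightarrow> X j = X' j" "\<And>i. i \<le> n \<Longrightarrow> f i = f' i" "i \<le> n"
  shows "(ser_op X ^^ m) f i = (ser_op X' ^^ m) f' i"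
  using assms(3)
proof (induction m arbitrary: i)
  case 0
  then show ?case using assms(2) by simp
next
  case (Suc m)
  then show ?case
    using assms(1) by (simp, intro ser_op_cong) auto
qed

lemma ser_exp_cong:
  assumes "\<And>j. j \<le> n \<Longrightarrow> X j = X' j" "\<And>i. i \<le> n \<Longrightarrow> f i = f' i"
  shows "ser_exp s X f n = ser_exp s X' f' n"
  unfolding ser_exp_def using ser_op_pow_cong[OF assms] by simp

lemma ser_op_cong_below:
  assumes "X 0 = (\<lambda>_. 0)" "\<And>i. i < n \<Longrightarrow> f i = f' i"
  shows "ser_op X f n = ser_op X f' n"
  unfolding ser_op_def using assms by (intro sum.cong refl) (metis atMost_iff diff_less le_zero_eq not_gr0)

lemma ser_op_perturb:
  assumes "n \<le> p"
  shows "ser_op (X(p := (\<lambda>b. X p b + Y b))) f n = ser_op X f n + (if n = p then Y (f 0) else 0)"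
proof (cases "n = p")
  case True
  have "ser_op (X(p := (\<lambda>b. X p b + Y b))) f p = (\<Sum>j<p. X j (f (p - j))) + X p (f 0) + Y (f 0)"
    unfolding ser_op_def lessThan_Suc_atMost[symmetric] by simp
  also have "\<dots> = ser_op X f p + Y (f 0)"
    unfolding ser_op_def lessThan_Suc_atMost[symmetric] by simp
  finally show ?thesis
    using True by simp
next
  case False
  then show ?thesis
    using assms by (simp add: ser_op_def)
qed

locale kalgebra =
  fixes s :: "'k::field_char_0 \<Rightarrow> 'b::comm_ring_1 \<Rightarrow> 'b"
  assumes kalg: "kalg s"
begin

sublocale module s
  using kalg by (simp add: kalg_def)

lemma scale_mult_left: "s c (x * y) = s c x * y"
  using kalg by (simp add: kalg_def)

lemma scale_mult_right: "s c (x * y) = x * s c y"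
  by (metis scale_mult_left mult.commute)

lemma scale_mult_scale: "s a x * s b y = s (a * b) (x * y)"
proof -
  have "s (a * b) (x * y) = s a (x * s b y)"
    by (simp flip: scale_mult_right)
  also have "\<dots> = s a x * s b y"
    by (simp only: scale_mult_left)
  finally show ?thesis by simp
qed

lemma scale_of_nat: "s (of_nat k) x = of_nat k * x"
  by (induction k) (simp_all add: scale_left_distrib algebra_simps)

lemma ser_exp_0: "ser_exp s X f 0 = f 0"
  by (simp add: ser_exp_def)

context
  fixes D :: "'b \<Rightarrow> 'b"
  assumes der: "is_der s D"
begin

lemma der_module_hom: "module_hom s s D"
  using der by (simp add: is_der_def)

lemma der_add: "D (x + y) = D x + D y"
  using module_hom.add[OF der_module_hom] .

lemma der_diff: "D (x - y) = D x - D y"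
  using module_hom.diff[OF der_module_hom] .

lemma der_zero [simp]: "D 0 = 0"
  using module_hom.zero[OF der_module_hom] .

lemma der_scale: "D (s c x) = s c (D x)"
  using module_hom.scale[OF der_module_hom] .

lemma der_sum: "D (sum g S) = (\<Sum>a\<in>S. D (g a))"
  using module_hom.sum[OF der_module_hom] .

lemma der_mult: "D (x * y) = x * D y + D x * y"
  using der by (simp add: is_der_def)

lemma der_one: "D 1 = 0"
  using der_mult[of 1 1] by simp

lemma der_of_nat_mult: "D (of_nat k * x) = of_nat k * D x"
  by (metis scale_of_nat der_scale)

end

lemma is_der_add: "is_der s D \<Longrightarrow> is_der s E \<Longrightarrow> is_der s (\<lambda>b. D b + E b)"
  unfolding is_der_def module_hom_iff
  by (auto simp: scale_right_distrib algebra_simps)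

lemma lambda_der_perturb:
  "lambda_der s X \<Longrightarrow> is_der s Y \<Longrightarrow> 0 < p \<Longrightarrow> lambda_der s (X(p := (\<lambda>b. X p b + Y b)))"
  unfolding lambda_der_def using is_der_add by auto

context
  fixes X :: "nat \<Rightarrow> 'b \<Rightarrow> 'b"
  assumes X: "lambda_der s X"
begin

lemma lambda_der_0: "X 0 = (\<lambda>_. 0)"
  using X by (simp add: lambda_der_def)

lemma lambda_der_is_der: "is_der s (X j)"
  using X by (simp add: lambda_der_def)

lemmas lambda_der_coeff_rules = der_add[OF lambda_der_is_der] der_diff[OF lambda_der_is_der]
  der_zero[OF lambda_der_is_der] der_scale[OF lambda_der_is_der] der_sum[OF lambda_der_is_der]
  der_mult[OF lambda_der_is_der] der_one[OF lambda_der_is_der] der_of_nat_mult[OF lambda_der_is_der]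

lemma ser_op_add: "ser_op X (\<lambda>n. f n + g n) = (\<lambda>n. ser_op X f n + ser_op X g n)"
  by (auto simp: ser_op_def lambda_der_coeff_rules sum.distrib)

lemma ser_op_diff: "ser_op X (\<lambda>n. f n - g n) = (\<lambda>n. ser_op X f n - ser_op X g n)"
  by (auto simp: ser_op_def lambda_der_coeff_rules sum_subtractf)

lemma ser_op_sum: "ser_op X (\<lambda>n. \<Sum>i\<in>I. h i n) = (\<lambda>n. \<Sum>i\<in>I. ser_op X (h i) n)"
  unfolding ser_op_def by (simp add: lambda_der_coeff_rules sum.swap[of _ I])

lemma ser_op_of_nat_mult: "ser_op X (\<lambda>n. of_nat k * h n) = (\<lambda>n. of_nat k * ser_op X h n)"
  by (rule ext) (simp add: ser_op_def der_of_nat_mult[OF lambda_der_is_der] sum_distrib_left)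

lemma ser_op_smult: "ser_op X (ser_smult s c f) = ser_smult s c (ser_op X f)"
proof
  fix n
  have "ser_op X (ser_smult s c f) n = (\<Sum>j\<le>n. \<Sum>i\<le>n - j. s (c i) (X j (f (n - j - i))))"
    unfolding ser_op_def ser_smult_def by (simp add: lambda_der_coeff_rules)
  also have "\<dots> = ser_smult s c (ser_op X f) n"
    unfolding ser_op_def ser_smult_def
    by (subst sum_triangle_swap) (simp add: scale_sum_right diff_commute add.commute)
  finally show "ser_op X (ser_smult s c f) n = ser_smult s c (ser_op X f) n" .
qed

lemma ser_op_mult:
  "ser_op X (ser_mult f g) = (\<lambda>n. ser_mult f (ser_op X g) n + ser_mult (ser_op X f) g n)"
proof
  fix n
  have "ser_op X (ser_mult f g) n
      = (\<Sum>j\<le>n. \<Sum>i\<le>n - j. f i * X j (g (n - j - i)))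
      + (\<Sum>j\<le>n. \<Sum>i\<le>n - j. X j (f i) * g (n - j - i))"
    unfolding ser_op_def ser_mult_def by (simp add: lambda_der_coeff_rules sum.distrib)
  also have "(\<Sum>j\<le>n. \<Sum>i\<le>n - j. f i * X j (g (n - j - i))) = ser_mult f (ser_op X g) n"
    unfolding ser_op_def ser_mult_def
    by (subst sum_triangle_swap) (simp add: sum_distrib_left diff_commute add.commute)
  also have "(\<Sum>j\<le>n. \<Sum>i\<le>n - j. X j (f i) * g (n - j - i)) = ser_mult (ser_op X f) g n"
    unfolding ser_op_def ser_mult_def
    by (subst sum_triangle_reindex[symmetric, where H = "\<lambda>j i. X j (f i) * g (n - j - i)"])
       (simp add: sum_distrib_right)
  finally show "ser_op X (ser_mult f g) n = ser_mult f (ser_op X g) n + ser_mult (ser_op X f) g n" .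
qed

lemma ser_op_pow_add:
  "(ser_op X ^^ m) (\<lambda>n. f n + g n) = (\<lambda>n. (ser_op X ^^ m) f n + (ser_op X ^^ m) g n)"
  by (induction m) (auto simp: ser_op_add)

lemma ser_op_pow_diff:
  "(ser_op X ^^ m) (\<lambda>n. f n - g n) = (\<lambda>n. (ser_op X ^^ m) f n - (ser_op X ^^ m) g n)"
  by (induction m) (auto simp: ser_op_diff)

lemma ser_op_pow_smult: "(ser_op X ^^ m) (ser_smult s c f) = ser_smult s c ((ser_op X ^^ m) f)"
  by (induction m) (auto simp: ser_op_smult)

lemma ser_op_pow_eq_0: "n < m \<Longrightarrow> (ser_op X ^^ m) f n = 0"
proof (induction m arbitrary: n)
  case (Suc m)
  have "X j ((ser_op X ^^ m) f (n - j)) = 0" if "j \<le> n" for j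
    using Suc that by (cases "j = 0") (auto simp: lambda_der_0 lambda_der_coeff_rules)
  then show ?case
    unfolding funpow.simps comp_def ser_op_def[of X "(ser_op X ^^ m) f"] by simp
qed simp

lemma ser_op_pow_mult:
  "(ser_op X ^^ m) (ser_mult f g)
    = (\<lambda>n. \<Sum>i\<le>m. of_nat (m choose i) * ser_mult ((ser_op X ^^ i) f) ((ser_op X ^^ (m - i)) g) n)"
proof (induction m)
  case (Suc m)
  let ?T = "\<lambda>i l. ser_mult ((ser_op X ^^ i) f) ((ser_op X ^^ l) g)"
  have "(ser_op X ^^ Suc m) (ser_mult f g) = ser_op X (\<lambda>n. \<Sum>i\<le>m. of_nat (m choose i) * ?T i (m - i) n)"
    using Suc by simp
  also have "\<dots> = (\<lambda>n. \<Sum>i\<le>m. of_nat (m choose i) * ser_op X (?T i (m - i)) n)"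
    by (simp add: ser_op_sum ser_op_of_nat_mult)
  also have "\<dots> = (\<lambda>n. \<Sum>i\<le>m. of_nat (m choose i) * (?T i (Suc m - i) n + ?T (Suc i) (m - i) n))"
    by (intro ext sum.cong refl) (simp add: ser_op_mult Suc_diff_le)
  also have "\<dots> = (\<lambda>n. \<Sum>i\<le>Suc m. of_nat (Suc m choose i) * ?T i (Suc m - i) n)"
    by (rule ext) (rule sum_binomial_pascal)
  finally show ?case .
qed simp

lemma ser_exp_extend:
  "n \<le> N \<Longrightarrow> ser_exp s X f n = (\<Sum>m\<le>N. s (inverse (of_nat (fact m))) ((ser_op X ^^ m) f n))"
  unfolding ser_exp_def by (rule sum.mono_neutral_left) (auto simp: ser_op_pow_eq_0)

lemma ser_exp_add: "ser_exp s X (\<lambda>n. f n + g n) = (\<lambda>n. ser_exp s X f n + ser_exp s X g n)"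
  by (auto simp: ser_exp_def ser_op_pow_add scale_right_distrib sum.distrib)

lemma ser_exp_diff: "ser_exp s X (\<lambda>n. f n - g n) = (\<lambda>n. ser_exp s X f n - ser_exp s X g n)"
  by (auto simp: ser_exp_def ser_op_pow_diff scale_right_diff_distrib sum_subtractf)

lemma ser_exp_smult: "ser_exp s X (ser_smult s c f) = ser_smult s c (ser_exp s X f)"
proof
  fix n
  have "ser_exp s X (ser_smult s c f) n
      = (\<Sum>m\<le>n. \<Sum>i\<le>n. s (c i * inverse (of_nat (fact m))) ((ser_op X ^^ m) f (n - i)))"
    unfolding ser_exp_def ser_op_pow_smult by (simp add: ser_smult_def scale_sum_right mult.commute)
  also have "\<dots> = ser_smult s c (ser_exp s X f) n"
    unfolding ser_smult_def
    by (subst sum.swap, intro sum.cong refl, subst ser_exp_extend[of _ n]) (auto simp: scale_sum_right)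
  finally show "ser_exp s X (ser_smult s c f) n = ser_smult s c (ser_exp s X f) n" .
qed

lemma ser_exp_mult: "ser_exp s X (ser_mult f g) = ser_mult (ser_exp s X f) (ser_exp s X g)"
proof
  fix n
  let ?e = "\<lambda>m. inverse (of_nat (fact m)) :: 'k"
  let ?P = "\<lambda>i. ser_op X ^^ i"
  let ?T = "\<lambda>i l. ser_mult (?P i f) (?P l g) n"
  let ?H = "\<lambda>i l. s (?e i * ?e l) (?T i l)"
  have "ser_exp s X (ser_mult f g) n = (\<Sum>m\<le>n. \<Sum>i\<le>m. s (?e m) (of_nat (m choose i) * ?T i (m - i)))"
    unfolding ser_exp_def ser_op_pow_mult by (simp add: scale_sum_right)
  also have "\<dots> = (\<Sum>m\<le>n. \<Sum>i\<le>m. ?H i (m - i))"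
    by (intro sum.cong refl) (simp add: scale_of_nat[symmetric] inverse_fact_mult_binomial)
  also have "\<dots> = (\<Sum>i\<le>n. \<Sum>l\<le>n - i. ?H i l)"
    by (rule sum_triangle_reindex)
  also have "\<dots> = (\<Sum>i\<le>n. \<Sum>l\<le>n. ?H i l)"
  proof (rule sum.cong[OF refl], rule sum.mono_neutral_left, simp, simp, intro ballI)
    fix i l assume "l \<in> {..n} - {..n - i}"
    then have "?T i l = 0"
      by (intro ser_mult_eq_0[of i _ l]) (auto intro: ser_op_pow_eq_0)
    then show "?H i l = 0" by simp
  qed
  also have "\<dots> = (\<Sum>i\<le>n. \<Sum>l\<le>n. \<Sum>a\<le>n. s (?e i) (?P i f a) * s (?e l) (?P l g (n - a)))"
    by (simp add: ser_mult_def scale_sum_right scale_mult_scale)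
  also have "\<dots> = (\<Sum>a\<le>n. \<Sum>i\<le>n. \<Sum>l\<le>n. s (?e i) (?P i f a) * s (?e l) (?P l g (n - a)))"
    by (subst sum.swap, rule sum.cong, simp, rule sum.swap)
  also have "\<dots> = ser_mult (ser_exp s X f) (ser_exp s X g) n"
    unfolding ser_mult_def
    by (rule sum.cong, simp, subst (1 2) ser_exp_extend[where N = n], simp_all add: sum_product)
  finally show "ser_exp s X (ser_mult f g) n = ser_mult (ser_exp s X f) (ser_exp s X g) n" .
qed

lemma ser_exp_one: "ser_exp s X ser_one = ser_one"
proof -
  have "ser_op X ser_one = (\<lambda>_. 0)"
    unfolding ser_op_def ser_one_def by (intro ext sum.neutral ballI) (simp add: lambda_der_coeff_rules)
  moreover have "ser_op X (\<lambda>_. 0) = (\<lambda>_. 0)"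
    unfolding ser_op_def by (simp add: lambda_der_coeff_rules)
  ultimately have "(ser_op X ^^ Suc m) ser_one = (\<lambda>_. 0)" for m
    by (induction m) simp_all
  then have "(ser_op X ^^ m) ser_one n = 0" if "m \<noteq> 0" for m n
    using that by (metis not0_implies_Suc)
  then have "ser_exp s X ser_one n = s (inverse (of_nat (fact 0))) ((ser_op X ^^ 0) ser_one n)" for n
    unfolding ser_exp_def by (intro sum_eq_single) auto
  then show ?thesis
    by auto
qed

text \<open>Up to order \<open>p\<close>, the only new term in \<open>exp(X + \<lambda>\<^sup>p Y)\<close> is \<open>\<lambda>\<^sup>p Y f\<^sub>0\<close>: every other one
  contains a further factor of \<open>X\<close> and hence of \<open>\<lambda>\<close>.\<close>
lemma ser_op_pow_perturb:
  assumes "is_der s Y" "0 < p" "n \<le> p"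
  shows "(ser_op (X(p := (\<lambda>b. X p b + Y b))) ^^ m) f n
       = (ser_op X ^^ m) f n + (if m = 1 \<and> n = p then Y (f 0) else 0)"
  using assms(3)
proof (induction m arbitrary: n)
  case (Suc m)
  let ?X' = "X(p := (\<lambda>b. X p b + Y b))"
  have "(ser_op ?X' ^^ Suc m) f n = ser_op X ((ser_op ?X' ^^ m) f) n
      + (if n = p then Y ((ser_op ?X' ^^ m) f 0) else 0)"
    using Suc.prems by (simp add: ser_op_perturb)
  also have "ser_op X ((ser_op ?X' ^^ m) f) n = ser_op X ((ser_op X ^^ m) f) n"
  proof (rule ser_op_cong_below)
    show "X 0 = (\<lambda>_. 0)"
      by (rule lambda_der_0)
    fix i assume "i < n"
    with Suc.prems have "i \<le> p" "i \<noteq> p"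
      by auto
    from Suc.IH[OF this(1)] this(2) show "(ser_op ?X' ^^ m) f i = (ser_op X ^^ m) f i"
      by (simp add: fun_upd_def)
  qed
  also have "(ser_op ?X' ^^ m) f 0 = (if m = 0 then f 0 else 0)"
    using Suc.IH[of 0] \<open>0 < p\<close> ser_op_pow_eq_0[of 0 m] by (simp add: fun_upd_def)
  finally show ?case
    using der_zero[OF \<open>is_der s Y\<close>] by (simp add: fun_upd_def)
qed simp

lemma ser_exp_perturb:
  assumes "is_der s Y" "0 < p" "n \<le> p"
  shows "ser_exp s (X(p := (\<lambda>b. X p b + Y b))) f n = ser_exp s X f n + (if n = p then Y (f 0) else 0)"
proof -
  have "ser_exp s (X(p := (\<lambda>b. X p b + Y b))) f n
      = ser_exp s X f n + (\<Sum>m\<le>n. s (inverse (of_nat (fact m))) (if m = 1 \<and> n = p then Y (f 0) else 0))"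
    unfolding ser_exp_def using assms by (simp add: ser_op_pow_perturb scale_right_distrib sum.distrib)
  also have "(\<Sum>m\<le>n. s (inverse (of_nat (fact m))) (if m = 1 \<and> n = p then Y (f 0) else 0))
      = (if n = p then Y (f 0) else 0)"
    using assms by (cases "n = p") (auto simp: sum_eq_single[of _ 1])
  finally show ?thesis .
qed

end

end

section \<open>Construction of X order by order\<close>

lemma compatible_approximations_limit:
  fixes P :: "nat \<Rightarrow> (nat \<Rightarrow> 'x) \<Rightarrow> bool"
  assumes "P 0 X\<^sub>0" and "\<And>k X. P k X \<Longrightarrow> \<exists>X'. P (Suc k) X' \<and> (\<forall>j\<le>k. X' j = X j)"
  shows "\<exists>X. \<forall>k. \<exists>Y. P k Y \<and> (\<forall>j\<le>k. X j = Y j)"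
proof -
  define extend where "extend k X = (SOME X'. P (Suc k) X' \<and> (\<forall>j\<le>k. X' j = X j))" for k X
  have extend: "P (Suc k) (extend k X) \<and> (\<forall>j\<le>k. extend k X j = X j)" if "P k X" for k X
    unfolding extend_def by (rule someI_ex[OF assms(2)[OF that]])
  define Xs where "Xs = rec_nat X\<^sub>0 extend"
  have P: "P k (Xs k)" for k
    by (induction k) (simp_all add: Xs_def assms(1) extend)
  have stable: "Xs k j = Xs j j" if "j \<le> k" for j k
    using that
  proof (induction k)
    case (Suc k)
    then show ?case
      using extend[OF P[of k]] by (cases "j = Suc k") (auto simp: Xs_def)
  qed simp
  have "\<exists>Y. P k Y \<and> (\<forall>j\<le>k. Xs j j = Y j)" for k
    using P[of k] stable[of _ k] by auto
  then show ?thesis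
    by (rule exI[of _ "\<lambda>j. Xs j j", OF allI])
qed

locale deformation_problem =
  A: kalgebra sA + B: kalgebra sB
  for sA :: "'k::field_char_0 \<Rightarrow> 'a::comm_ring_1 \<Rightarrow> 'a" and sB :: "'k \<Rightarrow> 'b::comm_ring_1 \<Rightarrow> 'b" +
  fixes pi0 :: "'a \<Rightarrow> 'a \<Rightarrow> 'a" and sigma0 :: "'b \<Rightarrow> 'b \<Rightarrow> 'b" and phi0 :: "'a \<Rightarrow> 'b"
    and pid :: "nat \<Rightarrow> 'a \<Rightarrow> 'a \<Rightarrow> 'a" and sigma :: "nat \<Rightarrow> 'b \<Rightarrow> 'b \<Rightarrow> 'b"
  assumes phi0: "poisson_hom sA sB pi0 sigma0 phi0"
    and pid: "formal_poisson_deformation sA pi0 pid"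
    and sigma: "formal_poisson_deformation sB sigma0 sigma"
begin

lemma pid_0: "pid 0 = pi0"
  and pid_bilinear: "kbilinear sA sA (pid j)"
  and pid_antisym: "ser_bracket pid f g = (\<lambda>n. - ser_bracket pid g f n)"
  and pid_jacobi: "(\<lambda>n. ser_bracket pid f (ser_bracket pid g h) n + ser_bracket pid g (ser_bracket pid h f) n
      + ser_bracket pid h (ser_bracket pid f g) n) = (\<lambda>_. 0)"
  and pid_leibniz: "ser_bracket pid f (ser_mult g h)
      = (\<lambda>n. ser_mult (ser_bracket pid f g) h n + ser_mult g (ser_bracket pid f h) n)"
  using pid unfolding formal_poisson_deformation_def by blast+

lemma sigma_0: "sigma 0 = sigma0"
  and sigma_bilinear: "kbilinear sB sB (sigma j)"
  and sigma_antisym: "ser_bracket sigma f g = (\<lambda>n. - ser_bracket sigma g f n)"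
  and sigma_jacobi: "(\<lambda>n. ser_bracket sigma f (ser_bracket sigma g h) n
      + ser_bracket sigma g (ser_bracket sigma h f) n + ser_bracket sigma h (ser_bracket sigma f g) n)
      = (\<lambda>_. 0)"
  and sigma_leibniz: "ser_bracket sigma f (ser_mult g h)
      = (\<lambda>n. ser_mult (ser_bracket sigma f g) h n + ser_mult g (ser_bracket sigma f h) n)"
  using sigma unfolding formal_poisson_deformation_def by blast+

lemma pi0_antisym: "pi0 a b = - pi0 b a"
  using fun_cong[OF pid_antisym[of "ser_monom a 0" "ser_monom b 0"], of 0]
  by (simp add: ser_bracket_0 pid_0 ser_monom_def)

lemma sigma0_antisym: "sigma0 x y = - sigma0 y x"
  using fun_cong[OF sigma_antisym[of "ser_monom x 0" "ser_monom y 0"], of 0]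
  by (simp add: ser_bracket_0 sigma_0 ser_monom_def)

lemmas pid_bracket = ser_bracket_add_right[where pb = pid, OF A.module_axioms pid_bilinear]
  ser_bracket_scale_right[where pb = pid, OF A.module_axioms pid_bilinear]
  ser_bracket_shift_right[where pb = pid, OF A.module_axioms pid_bilinear]

lemmas sigma_bracket = ser_bracket_add_left[where pb = sigma, OF B.module_axioms sigma_bilinear]
  ser_bracket_add_right[where pb = sigma, OF B.module_axioms sigma_bilinear]
  ser_bracket_scale_right[where pb = sigma, OF B.module_axioms sigma_bilinear]
  ser_bracket_shift_right[where pb = sigma, OF B.module_axioms sigma_bilinear]

lemma sigma0_minus_right: "sigma0 x (- y) = - sigma0 x y"
  using bracket_minus_right[where pb = sigma and j = 0, OF B.module_axioms sigma_bilinear] by (simp add: sigma_0)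

lemma phi0_module_hom: "module_hom sA sB phi0"
  using phi0 by (simp add: poisson_hom_def alg_hom_def)

lemma phi0_mult: "phi0 (x * y) = phi0 x * phi0 y"
  and phi0_one: "phi0 1 = 1"
  and phi0_bracket: "phi0 (pi0 x y) = sigma0 (phi0 x) (phi0 y)"
  using phi0 by (simp_all add: poisson_hom_def alg_hom_def)

lemmas phi0_linear = module_hom.zero[OF phi0_module_hom]
  module_hom.add[OF phi0_module_hom] module_hom.diff[OF phi0_module_hom]
  module_hom.scale[OF phi0_module_hom] module_hom.sum[OF phi0_module_hom]

lemma ser_map_add: "ser_map phi0 (\<lambda>n. f n + g n) = (\<lambda>n. ser_map phi0 f n + ser_map phi0 g n)"
  and ser_map_diff: "ser_map phi0 (\<lambda>n. f n - g n) = (\<lambda>n. ser_map phi0 f n - ser_map phi0 g n)"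
  and ser_map_smult: "ser_map phi0 (ser_smult sA c f) = ser_smult sB c (ser_map phi0 f)"
  and ser_map_mult: "ser_map phi0 (ser_mult f g) = ser_mult (ser_map phi0 f) (ser_map phi0 g)"
  and ser_map_one: "ser_map phi0 ser_one = ser_one"
  by (simp_all add: fun_eq_iff ser_map_def ser_smult_def ser_mult_def ser_one_def phi0_linear phi0_mult phi0_one)

abbreviation Phi :: "(nat \<Rightarrow> 'b \<Rightarrow> 'b) \<Rightarrow> (nat \<Rightarrow> 'a) \<Rightarrow> nat \<Rightarrow> 'b" where
  "Phi X f \<equiv> ser_exp sB X (ser_map phi0 f)"

lemma Phi_0: "Phi X f 0 = phi0 (f 0)"
  by (simp add: B.ser_exp_0 ser_map_def)

context
  fixes X :: "nat \<Rightarrow> 'b \<Rightarrow> 'b"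
  assumes X: "lambda_der sB X"
begin

lemma Phi_add: "Phi X (\<lambda>n. f n + g n) = (\<lambda>n. Phi X f n + Phi X g n)"
  by (simp add: ser_map_add B.ser_exp_add[OF X])

lemma Phi_diff: "Phi X (\<lambda>n. f n - g n) = (\<lambda>n. Phi X f n - Phi X g n)"
  by (simp add: ser_map_diff B.ser_exp_diff[OF X])

lemma Phi_zero: "Phi X (\<lambda>_. 0) = (\<lambda>_. 0)"
  using Phi_diff[of "\<lambda>_. 0" "\<lambda>_. 0"] by simp

lemma Phi_minus: "Phi X (\<lambda>n. - f n) = (\<lambda>n. - Phi X f n)"
  using Phi_diff[of "\<lambda>_. 0" f] Phi_zero by (simp add: fun_eq_iff)

lemma Phi_smult: "Phi X (ser_smult sA c f) = ser_smult sB c (Phi X f)"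
  by (simp add: ser_map_smult B.ser_exp_smult[OF X])

lemma Phi_mult: "Phi X (ser_mult f g) = ser_mult (Phi X f) (Phi X g)"
  by (simp add: ser_map_mult B.ser_exp_mult[OF X])

lemma Phi_one: "Phi X ser_one = ser_one"
  by (simp add: ser_map_one B.ser_exp_one[OF X])

lemma Phi_scale: "Phi X (\<lambda>n. sA r (f n)) = (\<lambda>n. sB r (Phi X f n))"
  using Phi_smult[of "ser_monom r 0" f]
  by (simp add: ser_smult_monom_0[OF A.module_axioms] ser_smult_monom_0[OF B.module_axioms])

lemma Phi_shift: "Phi X (ser_shift f) = ser_shift (Phi X f)"
  using Phi_smult[of "ser_monom 1 1" f]
  unfolding ser_smult_monom_1[OF A.module_axioms] ser_smult_monom_1[OF B.module_axioms] .

end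

lemma Phi_perturb:
  assumes "lambda_der sB X" "is_der sB Y" "0 < p" "n \<le> p"
  shows "Phi (X(p := (\<lambda>b. X p b + Y b))) f n = Phi X f n + (if n = p then Y (phi0 (f 0)) else 0)"
  using B.ser_exp_perturb[OF assms] by (simp add: ser_map_def)

lemma Phi_cong:
  assumes "\<And>j. j \<le> n \<Longrightarrow> X j = X' j"
  shows "Phi X f n = Phi X' f n"
  by (rule ser_exp_cong) (use assms in auto)

definition bracket_defect :: "(nat \<Rightarrow> 'b \<Rightarrow> 'b) \<Rightarrow> (nat \<Rightarrow> 'a) \<Rightarrow> (nat \<Rightarrow> 'a) \<Rightarrow> nat \<Rightarrow> 'b" where
  "bracket_defect X f g = (\<lambda>n. Phi X (ser_bracket pid f g) n - ser_bracket sigma (Phi X f) (Phi X g) n)"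

definition bracket_preserved_upto :: "nat \<Rightarrow> (nat \<Rightarrow> 'b \<Rightarrow> 'b) \<Rightarrow> bool" where
  "bracket_preserved_upto k X \<longleftrightarrow> (\<forall>f g n. n \<le> k \<longrightarrow> bracket_defect X f g n = 0)"

lemma bracket_defect_0: "bracket_defect X f g 0 = 0"
  by (simp add: bracket_defect_def ser_bracket_0 Phi_0 pid_0 sigma_0 phi0_bracket)

lemma bracket_preserved_upto_0: "bracket_preserved_upto 0 X"
  by (simp add: bracket_preserved_upto_def bracket_defect_0)

lemma bracket_defect_cong:
  assumes "\<And>j. j \<le> n \<Longrightarrow> X j = X' j"
  shows "bracket_defect X f g n = bracket_defect X' f g n"
proof -
  have "Phi X u i = Phi X' u i" if "i \<le> n" for u i
    using assms that by (intro Phi_cong) auto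
  then show ?thesis
    unfolding bracket_defect_def by (simp cong: ser_bracket_cong)
qed

lemma bracket_preserved_upto_cong:
  "bracket_preserved_upto k X \<Longrightarrow> (\<And>j. j \<le> k \<Longrightarrow> X j = X' j) \<Longrightarrow> bracket_preserved_upto k X'"
  unfolding bracket_preserved_upto_def using bracket_defect_cong
  by (metis order.trans)

context
  fixes X :: "nat \<Rightarrow> 'b \<Rightarrow> 'b"
  assumes X: "lambda_der sB X"
begin

lemma bracket_defect_antisym: "bracket_defect X f g = (\<lambda>n. - bracket_defect X g f n)"
proof -
  have "Phi X (ser_bracket pid f g) = (\<lambda>n. - Phi X (ser_bracket pid g f) n)"
    by (subst pid_antisym) (simp add: Phi_minus[OF X])
  then show ?thesis
    unfolding bracket_defect_def by (subst sigma_antisym) (simp add: fun_eq_iff)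
qed

lemma bracket_defect_add_right:
  "bracket_defect X f (\<lambda>n. u n + v n) = (\<lambda>n. bracket_defect X f u n + bracket_defect X f v n)"
  unfolding bracket_defect_def by (simp add: pid_bracket sigma_bracket Phi_add[OF X] fun_eq_iff)

lemma bracket_defect_scale_right:
  "bracket_defect X f (\<lambda>n. sA r (u n)) = (\<lambda>n. sB r (bracket_defect X f u n))"
  unfolding bracket_defect_def
  by (simp add: pid_bracket sigma_bracket Phi_scale[OF X] B.scale_right_diff_distrib)

lemma bracket_defect_shift_right: "bracket_defect X f (ser_shift u) = ser_shift (bracket_defect X f u)"
  unfolding bracket_defect_def by (simp add: pid_bracket sigma_bracket Phi_shift[OF X] ser_shift_diff)

lemma bracket_defect_mult_right:
  "bracket_defect X f (ser_mult u v)
    = (\<lambda>n. ser_mult (bracket_defect X f u) (Phi X v) n + ser_mult (Phi X u) (bracket_defect X f v) n)"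
  unfolding bracket_defect_def
  by (simp add: pid_leibniz sigma_leibniz Phi_add[OF X] Phi_mult[OF X]
      ser_mult_diff_left ser_mult_diff_right fun_eq_iff)

end

definition obstruction :: "(nat \<Rightarrow> 'b \<Rightarrow> 'b) \<Rightarrow> nat \<Rightarrow> 'a \<Rightarrow> 'a \<Rightarrow> 'b" where
  "obstruction X p a b = bracket_defect X (ser_monom a 0) (ser_monom b 0) p"

context
  fixes X :: "nat \<Rightarrow> 'b \<Rightarrow> 'b" and k :: nat
  assumes X: "lambda_der sB X" and preserved: "bracket_preserved_upto k X"
begin

lemma bracket_defect_below: "i < Suc k \<Longrightarrow> bracket_defect X f u i = 0"
  using preserved by (simp add: bracket_preserved_upto_def)

text \<open>Splitting \<open>u = u\<^sub>0 + \<lambda> u'\<close>, the term \<open>\<lambda> u'\<close> contributes to the defect of order \<open>k + 1\<close>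
  only through the defect of order \<open>k\<close>, which vanishes.\<close>
lemma bracket_defect_next_right: "bracket_defect X f u (Suc k) = bracket_defect X f (ser_monom (u 0) 0) (Suc k)"
proof -
  have "bracket_defect X f u (Suc k)
      = bracket_defect X f (\<lambda>n. ser_monom (u 0) 0 n + ser_shift (\<lambda>n. u (Suc n)) n) (Suc k)"
    by (subst ser_eq_monom_0_plus_shift[of u]) (rule refl)
  also have "\<dots> = bracket_defect X f (ser_monom (u 0) 0) (Suc k)
      + ser_shift (bracket_defect X f (\<lambda>n. u (Suc n))) (Suc k)"
    by (simp add: bracket_defect_add_right[OF X] bracket_defect_shift_right[OF X])
  also have "ser_shift (bracket_defect X f (\<lambda>n. u (Suc n))) (Suc k) = 0"
    by (simp add: ser_shift_def bracket_defect_below)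
  finally show ?thesis by simp
qed

lemma bracket_defect_next: "bracket_defect X f u (Suc k) = obstruction X (Suc k) (f 0) (u 0)"
proof -
  have "bracket_defect X f u (Suc k) = - bracket_defect X (ser_monom (u 0) 0) f (Suc k)"
    by (subst bracket_defect_next_right, subst bracket_defect_antisym[OF X]) simp
  also have "\<dots> = bracket_defect X (ser_monom (f 0) 0) (ser_monom (u 0) 0) (Suc k)"
    by (subst bracket_defect_next_right, subst bracket_defect_antisym[OF X]) (simp add: ser_monom_def)
  finally show ?thesis
    by (simp add: obstruction_def)
qed

lemma obstruction_antisym: "obstruction X (Suc k) a b = - obstruction X (Suc k) b a"
  unfolding obstruction_def by (subst bracket_defect_antisym[OF X]) simp

lemma obstruction_add_right:
  "obstruction X (Suc k) a (b + c) = obstruction X (Suc k) a b + obstruction X (Suc k) a c"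
  unfolding obstruction_def ser_monom_add by (simp add: bracket_defect_add_right[OF X])

lemma obstruction_scale_right: "obstruction X (Suc k) a (sA r b) = sB r (obstruction X (Suc k) a b)"
proof -
  have "ser_monom (sA r b) 0 = (\<lambda>n. sA r (ser_monom b 0 n))"
    by (auto simp: ser_monom_def)
  then show ?thesis
    unfolding obstruction_def by (simp add: bracket_defect_scale_right[OF X])
qed

lemma obstruction_minus_right: "obstruction X (Suc k) a (- b) = - obstruction X (Suc k) a b"
  using obstruction_scale_right[of a "- 1" b] by (simp add: A.scale_minus_left B.scale_minus_left)

lemma obstruction_der_right:
  "obstruction X (Suc k) a (b * c) = phi0 b * obstruction X (Suc k) a c + obstruction X (Suc k) a b * phi0 c"
proof -
  let ?D = "bracket_defect X (ser_monom a 0)"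
  have "obstruction X (Suc k) a (b * c)
      = ser_mult (?D (ser_monom b 0)) (Phi X (ser_monom c 0)) (Suc k)
      + ser_mult (Phi X (ser_monom b 0)) (?D (ser_monom c 0)) (Suc k)"
    by (simp add: obstruction_def ser_mult_monom_0[symmetric] bracket_defect_mult_right[OF X])
  also have "ser_mult (?D (ser_monom b 0)) (Phi X (ser_monom c 0)) (Suc k) = obstruction X (Suc k) a b * phi0 c"
    by (subst ser_mult_low_zero_left[where p = "Suc k"])
       (auto simp: bracket_defect_below obstruction_def Phi_0 ser_monom_def)
  also have "ser_mult (Phi X (ser_monom b 0)) (?D (ser_monom c 0)) (Suc k) = phi0 b * obstruction X (Suc k) a c"
    by (subst ser_mult_low_zero_right[where p = "Suc k"])
       (auto simp: bracket_defect_below obstruction_def Phi_0 ser_monom_def)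
  finally show ?thesis
    by (simp add: algebra_simps)
qed

lemma obstruction_CE2_der: "CE2_der sA sB phi0 (obstruction X (Suc k))"
proof -
  note antisym = obstruction_antisym
  have add_left: "obstruction X (Suc k) (b + c) a = obstruction X (Suc k) b a + obstruction X (Suc k) c a" for a b c
    using antisym obstruction_add_right by (metis minus_add_distrib)
  have scale_left: "obstruction X (Suc k) (sA r b) a = sB r (obstruction X (Suc k) b a)" for a b r
    using antisym obstruction_scale_right by (metis B.scale_minus_right)
  have der_left: "obstruction X (Suc k) (b * c) a
      = phi0 b * obstruction X (Suc k) c a + obstruction X (Suc k) b a * phi0 c" for a b c
    using obstruction_der_right[of a b c] antisym[of "b * c" a] antisym[of b a] antisym[of c a]
    by (simp add: algebra_simps)
  show ?thesis
    unfolding CE2_der_def kbilinear_def der_along_def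
    by (auto simp: module_hom_iff A.module_axioms B.module_axioms obstruction_add_right
        obstruction_scale_right obstruction_der_right add_left scale_left der_left intro: antisym)
qed

lemma Phi_nested_bracket_next:
  "Phi X (ser_bracket pid f (ser_bracket pid u w)) (Suc k)
   = ser_bracket sigma (Phi X f) (ser_bracket sigma (Phi X u) (Phi X w)) (Suc k)
     + sigma0 (phi0 (f 0)) (obstruction X (Suc k) (u 0) (w 0))
     + obstruction X (Suc k) (f 0) (pi0 (u 0) (w 0))"
proof -
  have inner: "Phi X (ser_bracket pid u w)
      = (\<lambda>n. ser_bracket sigma (Phi X u) (Phi X w) n + bracket_defect X u w n)"
    by (simp add: bracket_defect_def)
  have "ser_bracket sigma (Phi X f) (bracket_defect X u w) (Suc k)
      = sigma0 (phi0 (f 0)) (obstruction X (Suc k) (u 0) (w 0))"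
    by (subst ser_bracket_low_zero_right[where pb = sigma, OF B.module_axioms sigma_bilinear])
       (auto simp: bracket_defect_below bracket_defect_next sigma_0 Phi_0)
  moreover have "bracket_defect X f (ser_bracket pid u w) (Suc k) = obstruction X (Suc k) (f 0) (pi0 (u 0) (w 0))"
    by (simp add: bracket_defect_next ser_bracket_0 pid_0)
  ultimately show ?thesis
    unfolding bracket_defect_def
    by (simp add: inner sigma_bracket algebra_simps)
qed

lemma obstruction_cocycle: "ce_d2 pi0 sigma0 phi0 (obstruction X (Suc k)) = (\<lambda>_ _ _. 0)"
proof (intro ext)
  fix a b c :: 'a
  let ?Ob = "obstruction X (Suc k)"
  let ?f = "ser_monom a 0" and ?g = "ser_monom b 0" and ?h = "ser_monom c 0"
  have "Phi X (ser_bracket pid ?f (ser_bracket pid ?g ?h)) (Suc k)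
      + Phi X (ser_bracket pid ?g (ser_bracket pid ?h ?f)) (Suc k)
      + Phi X (ser_bracket pid ?h (ser_bracket pid ?f ?g)) (Suc k) = 0"
    using arg_cong[OF pid_jacobi[of ?f ?g ?h], of "Phi X"]
    by (simp add: Phi_add[OF X] Phi_zero[OF X] fun_eq_iff)
  moreover have "ser_bracket sigma (Phi X ?f) (ser_bracket sigma (Phi X ?g) (Phi X ?h)) (Suc k)
      + ser_bracket sigma (Phi X ?g) (ser_bracket sigma (Phi X ?h) (Phi X ?f)) (Suc k)
      + ser_bracket sigma (Phi X ?h) (ser_bracket sigma (Phi X ?f) (Phi X ?g)) (Suc k) = 0"
    using fun_cong[OF sigma_jacobi[of "Phi X ?f" "Phi X ?g" "Phi X ?h"], of "Suc k"] by simp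
  ultimately have "sigma0 (phi0 a) (?Ob b c) + ?Ob a (pi0 b c) + sigma0 (phi0 b) (?Ob c a)
      + ?Ob b (pi0 c a) + sigma0 (phi0 c) (?Ob a b) + ?Ob c (pi0 a b) = 0"
    unfolding Phi_nested_bracket_next by (simp add: ser_monom_def algebra_simps)
  moreover have "sigma0 (phi0 b) (?Ob c a) = - sigma0 (phi0 b) (?Ob a c)"
    by (subst obstruction_antisym) (rule sigma0_minus_right)
  moreover have "?Ob b (pi0 c a) = ?Ob (pi0 a c) b"
    by (subst pi0_antisym, subst obstruction_minus_right)
       (simp add: obstruction_antisym[of b])
  ultimately show "ce_d2 pi0 sigma0 phi0 ?Ob a b c = 0"
    unfolding ce_d2_def
    using obstruction_antisym[of a "pi0 b c"] obstruction_antisym[of c "pi0 a b"]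
    by (simp add: algebra_simps)
qed

lemma bracket_defect_perturb:
  assumes Y: "is_der sB Y" and "n \<le> Suc k"
  shows "bracket_defect (X(Suc k := (\<lambda>b. X (Suc k) b + Y b))) f w n
       = (if n = Suc k
          then obstruction X (Suc k) (f 0) (w 0) - ce_d1 pi0 sigma0 phi0 (Y \<circ> phi0) (f 0) (w 0)
          else 0)"
proof (cases "n = Suc k")
  case False
  then have "bracket_defect (X(Suc k := (\<lambda>b. X (Suc k) b + Y b))) f w n = bracket_defect X f w n"
    using assms(2) by (intro bracket_defect_cong) auto
  then show ?thesis
    using False assms(2) by (simp add: bracket_defect_below)
next
  case True
  let ?X' = "X(Suc k := (\<lambda>b. X (Suc k) b + Y b))"
  have Phi': "Phi ?X' u i = Phi X u i + ser_monom (Y (phi0 (u 0))) (Suc k) i" if "i \<le> Suc k" for u i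
    using Phi_perturb[OF X Y, of "Suc k" i u] that by (simp add: ser_monom_def)
  have "ser_bracket sigma (Phi ?X' f) (Phi ?X' w) (Suc k)
      = ser_bracket sigma (Phi X f) (Phi X w) (Suc k)
      + sigma0 (phi0 (f 0)) (Y (phi0 (w 0))) + sigma0 (Y (phi0 (f 0))) (phi0 (w 0))"
    by (subst ser_bracket_perturb[where pb = sigma, OF B.module_axioms sigma_bilinear _ Phi' Phi'])
       (simp_all add: Phi_0 sigma_0)
  moreover have "Phi ?X' (ser_bracket pid f w) (Suc k)
      = Phi X (ser_bracket pid f w) (Suc k) + Y (phi0 (pi0 (f 0) (w 0)))"
    by (simp add: Phi' ser_monom_def ser_bracket_0 pid_0)
  moreover have "sigma0 (Y (phi0 (f 0))) (phi0 (w 0)) = - sigma0 (phi0 (w 0)) (Y (phi0 (f 0)))"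
    by (rule sigma0_antisym)
  ultimately show ?thesis
    using True bracket_defect_next[of f w]
    unfolding bracket_defect_def ce_d1_def by (simp add: algebra_simps)
qed

end

lemma bracket_preserved_extend:
  assumes H2: "H2_CE_der_zero sA sB pi0 sigma0 phi0" and lift: "\<exists>h. horizontal_lift sA sB phi0 h"
    and X: "lambda_der sB X" and preserved: "bracket_preserved_upto k X"
  shows "\<exists>X'. lambda_der sB X' \<and> bracket_preserved_upto (Suc k) X' \<and> (\<forall>j\<le>k. X' j = X j)"
proof -
  obtain E where E: "CE1_der sA sB phi0 E" "ce_d1 pi0 sigma0 phi0 E = obstruction X (Suc k)"
    using H2[unfolded H2_CE_der_zero_def, rule_format,
        OF conjI[OF obstruction_CE2_der[OF X preserved] obstruction_cocycle[OF X preserved]]]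
    by blast
  obtain h where "horizontal_lift sA sB phi0 h"
    using lift by blast
  with E(1) have Y: "is_der sB (h E)" and "h E \<circ> phi0 = E"
    unfolding horizontal_lift_def by blast+
  let ?X' = "X(Suc k := (\<lambda>b. X (Suc k) b + h E b))"
  show ?thesis
  proof (intro exI[of _ ?X'] conjI)
    show "lambda_der sB ?X'"
      using B.lambda_der_perturb[OF X Y] by simp
    show "bracket_preserved_upto (Suc k) ?X'"
    proof (unfold bracket_preserved_upto_def, intro allI impI)
      fix f w n assume "n \<le> Suc k"
      then show "bracket_defect ?X' f w n = 0"
        by (simp add: bracket_defect_perturb[OF X preserved Y] \<open>h E \<circ> phi0 = E\<close> E(2))
    qed
  qed simp
qed

lemma ser_poisson_hom_Phi:
  assumes X: "lambda_der sB X" and "\<And>f g. bracket_defect X f g = (\<lambda>_. 0)"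
  shows "ser_poisson_hom sA sB pid sigma (Phi X)"
  unfolding ser_poisson_hom_def
proof (intro conjI allI)
  show "Phi X (ser_bracket pid f g) = ser_bracket sigma (Phi X f) (Phi X g)" for f g
    using assms(2)[of f g] by (simp add: bracket_defect_def fun_eq_iff)
qed (simp_all add: Phi_add[OF X] Phi_smult[OF X] Phi_mult[OF X] Phi_one[OF X])

theorem exists_exp_poisson_hom:
  assumes "H2_CE_der_zero sA sB pi0 sigma0 phi0" and "\<exists>h. horizontal_lift sA sB phi0 h"
  shows "\<exists>X. lambda_der sB X \<and> ser_poisson_hom sA sB pid sigma (Phi X)"
proof -
  let ?P = "\<lambda>k Y. lambda_der sB Y \<and> bracket_preserved_upto k Y"
  have "?P 0 (\<lambda>_ _. 0)"
    by (simp add: lambda_der_def is_der_def module_hom_iff B.module_axioms bracket_preserved_upto_0)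
  moreover have "\<exists>Y'. ?P (Suc k) Y' \<and> (\<forall>j\<le>k. Y' j = Y j)" if "?P k Y" for k Y
    using bracket_preserved_extend[OF assms] that by blast
  ultimately have "\<exists>X. \<forall>k. \<exists>Y. ?P k Y \<and> (\<forall>j\<le>k. X j = Y j)"
    by (rule compatible_approximations_limit)
  then obtain X where approx: "\<And>k. \<exists>Y. ?P k Y \<and> (\<forall>j\<le>k. X j = Y j)"
    by blast
  have "X 0 = (\<lambda>_. 0)" and "is_der sB (X j)" for j
    using approx[of 0] approx[of j] by (auto simp: lambda_der_def)
  then have "lambda_der sB X"
    by (simp add: lambda_der_def)
  moreover have "bracket_defect X f g n = 0" for f g n
  proof -
    obtain Y where "bracket_preserved_upto n Y" "\<forall>j\<le>n. X j = Y j"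
      using approx by blast
    then have "bracket_preserved_upto n X"
      by (intro bracket_preserved_upto_cong[of n Y X]) auto
    then show ?thesis
      by (simp add: bracket_preserved_upto_def)
  qed
  ultimately show ?thesis
    using ser_poisson_hom_Phi by blast
qed

end

theorem proposition3p6:
  fixes sA :: "'k::field_char_0 \<Rightarrow> 'a::comm_ring_1 \<Rightarrow> 'a"
    and sB :: "'k \<Rightarrow> 'b::comm_ring_1 \<Rightarrow> 'b"
    and pi0 :: "'a \<Rightarrow> 'a \<Rightarrow> 'a" and sigma0 :: "'b \<Rightarrow> 'b \<Rightarrow> 'b"
    and phi0 :: "'a \<Rightarrow> 'b"
    and pid :: "nat \<Rightarrow> 'a \<Rightarrow> 'a \<Rightarrow> 'a" and sigma :: "nat \<Rightarrow> 'b \<Rightarrow> 'b \<Rightarrow> 'b"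
  assumes "kalg sA" and "kalg sB"
    and "poisson_bracket sA pi0" and "poisson_bracket sB sigma0"
    and "poisson_hom sA sB pi0 sigma0 phi0"
    and "\<exists>h. horizontal_lift sA sB phi0 h"
    and "H2_CE_der_zero sA sB pi0 sigma0 phi0"
    and "formal_poisson_deformation sA pi0 pid"
    and "formal_poisson_deformation sB sigma0 sigma"
  shows "\<exists>X :: nat \<Rightarrow> 'b \<Rightarrow> 'b. X 0 = (\<lambda>_. 0) \<and> (\<forall>j. is_der sB (X j))
           \<and> ser_poisson_hom sA sB pid sigma (\<lambda>f. ser_exp sB X (ser_map phi0 f))"
proof -
  interpret deformation_problem sA sB pi0 sigma0 phi0 pid sigma
    by (simp add: deformation_problem_def deformation_problem_axioms_def kalgebra_def assms)
  show ?thesis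
    using exists_exp_poisson_hom[OF assms(7,6)] by (simp add: lambda_der_def)
qed

end
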